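(* The left-join operator $⟕_F$ of the W3C SPARQL algebra is expressible in the core SPARQL algebra. That is, there is an expression built only from projection, selection, join, union and simple difference which, for every selection formula $F$ and all multisets of mappings $\Omega_1,\Omega_2$, evaluates to $\Omega_1 \,⟕_F\, \Omega_2$, with the same multiplicities.
   Context: Fix pairwise disjoint infinite sets $I$ (IRIs), $L$ (literals) and $V$ (variables), and let $T=I\cup L$. Solution mappings. A mapping is a partial function $\mu:V\to T$ with domain $\operatorname{dom}(\mu)$. Mappings $\mu_1,\mu_2$ are compatible ($\mu_1\sim\mu_2$) if they agree on every variable in $\operatorname{dom}(\mu_1)\cap\operatorname{dom}(\mu_2)$; then $\mu_1\cup\mu_2$ is a mapping. The restriction $\mu_{|W}$ of $\mu$ to $W\subseteq V$ is $\mu$ restricted to $\operatorname{dom}(\mu)\cap W$. Selection formulas. The atomic ones are $(?X=c)$, $(?X=?Y)$ and $\operatorname{bound}(?X)$, for $?X,?Y\in V$ and $c\in I\cup L$; they are closed under $\land$, $\lor$ and $\neg$. The value $\mu(F)\in\{\mathit{true},\mathit{false},\mathit{error}\}$ is defined as follows. - $(?X=c)$ and $(?X=?Y)$ are $\mathit{error}$ if some mentioned variable is outside $\operatorname{dom}(\mu)$; otherwise they are $\mathit{true}$ or $\mathit{false}$ according to equality. - $\operatorname{bound}(?X)$ is $\mathit{true}$ iff $?X\in\operatorname{dom}(\mu)$, and $\mathit{false}$ otherwise. - $\land$ is $\mathit{false}$ if some argument is $\mathit{false}$; else $\mathit{error}$ if some argument is $\mathit{error}$; else $\mathit{true}$.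 - $\lor$ is $\mathit{true}$ if some argument is $\mathit{true}$; else $\mathit{error}$ if some argument is $\mathit{error}$; else $\mathit{false}$. - $\neg$ swaps $\mathit{true}$ and $\mathit{false}$ and keeps $\mathit{error}$. Multisets. A multiset $\Omega$ of mappings assigns multiplicities $\mathrm{card}_\Omega(\mu)\ge0$. Operations, for multisets $\Omega_1,\Omega_2$. - Projection: $\pi_W(\Omega_1)$ is the multiset of restrictions $\mu_{|W}$ for $\mu\in\Omega_1$, with multiplicities summed. - Selection: $\sigma_F(\Omega_1)$ keeps the $\mu\in\Omega_1$ with $\mu(F)=\mathit{true}$, with multiplicities kept. - Join: $\Omega_1\Join\Omega_2$ is the multiset of $\mu_1\cup\mu_2$ for compatible $\mu_1\in\Omega_1$, $\mu_2\in\Omega_2$, where $\mathrm{card}(\mu)=\sum_{\mu=\mu_1\cup\mu_2}\mathrm{card}_{\Omega_1}(\mu_1)\,\mathrm{card}_{\Omega_2}(\mu_2)$. - Union: $\Omega_1\cup\Omega_2$, with multiplicities added. - Difference: $\Omega_1\setminus_F\Omega_2=\{\mu_1\in\Omega_1\mid\forall\mu_2\in\Omega_2,\ \mu_1\nsim\mu_2\lor(\mu_1\sim\mu_2\land(\mu_1\cup\mu_2)(F)=\mathit{false})\}$, with multiplicities as in $\Omega_1$. - Left-join: $\Omega_1\,⟕_F\,\Omega_2=\sigma_F(\Omega_1\Join\Omega_2)\cup(\Omega_1\setminus_F\Omega_2)$, with multiplicities added. - Simple difference: $\Omega_1\setminus\Omega_2=\{\mu_1\in\Omega_1\mid\forall\mu_2\in\Omega_2,\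 \mu_1\nsim\mu_2\}$, with multiplicities as in $\Omega_1$. The core SPARQL algebra consists of projection, selection, join, union and simple difference. An operator $O$ is expressible in a language $L$ iff some subset of the operators of $L$ can express the same queries as $O$. *)

theory Defs
  imports Main "HOL-Library.Multiset"
begin

datatype ('i, 'l) rdfterm = IRI 'i | Lit 'l

type_synonym ('v, 'i, 'l) mapping = "'v \<rightharpoonup> ('i, 'l) rdfterm"

definition compatible :: "('v, 'i, 'l) mapping \<Rightarrow> ('v, 'i, 'l) mapping \<Rightarrow> bool" where
  "compatible \<mu>1 \<mu>2 \<longleftrightarrow> (\<forall>x \<in> dom \<mu>1 \<inter> dom \<mu>2. \<mu>1 x = \<mu>2 x)"

datatype ('v, 'i, 'l) sformula =
    EqC 'v "('i, 'l) rdfterm"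
  | EqV 'v 'v
  | Bound 'v
  | FAnd "('v, 'i, 'l) sformula" "('v, 'i, 'l) sformula"
  | FOr "('v, 'i, 'l) sformula" "('v, 'i, 'l) sformula"
  | FNot "('v, 'i, 'l) sformula"

datatype tval = TTrue | TFalse | TError

fun tv_and :: "tval \<Rightarrow> tval \<Rightarrow> tval" where
  "tv_and a b = (if a = TFalse \<or> b = TFalse then TFalse
                 else if a = TError \<or> b = TError then TError else TTrue)"

fun tv_or :: "tval \<Rightarrow> tval \<Rightarrow> tval" where
  "tv_or a b = (if a = TTrue \<or> b = TTrue then TTrue
                else if a = TError \<or> b = TError then TError else TFalse)"

fun tv_not :: "tval \<Rightarrow> tval" where
  "tv_not TTrue = TFalse"
| "tv_not TFalse = TTrue"
| "tv_not TError = TError"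

fun feval :: "('v, 'i, 'l) mapping \<Rightarrow> ('v, 'i, 'l) sformula \<Rightarrow> tval" where
  "feval \<mu> (EqC x c) = (case \<mu> x of None \<Rightarrow> TError
                          | Some a \<Rightarrow> (if a = c then TTrue else TFalse))"
| "feval \<mu> (EqV x y) = (case (\<mu> x, \<mu> y) of (Some a, Some b) \<Rightarrow> (if a = b then TTrue else TFalse)
                          | _ \<Rightarrow> TError)"
| "feval \<mu> (Bound x) = (if x \<in> dom \<mu> then TTrue else TFalse)"
| "feval \<mu> (FAnd F G) = tv_and (feval \<mu> F) (feval \<mu> G)"
| "feval \<mu> (FOr F G) = tv_or (feval \<mu> F) (feval \<mu> G)"
| "feval \<mu> (FNot F) = tv_not (feval \<mu> F)"

type_synonym ('v, 'i, 'l) mset_map = "('v, 'i, 'l) mapping multiset"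

definition proj :: "'v set \<Rightarrow> ('v, 'i, 'l) mset_map \<Rightarrow> ('v, 'i, 'l) mset_map" where
  "proj W \<Omega> = image_mset (\<lambda>\<mu>. \<mu> |` W) \<Omega>"

definition sel :: "('v, 'i, 'l) sformula \<Rightarrow> ('v, 'i, 'l) mset_map \<Rightarrow> ('v, 'i, 'l) mset_map" where
  "sel F \<Omega> = filter_mset (\<lambda>\<mu>. feval \<mu> F = TTrue) \<Omega>"

definition join :: "('v, 'i, 'l) mset_map \<Rightarrow> ('v, 'i, 'l) mset_map \<Rightarrow> ('v, 'i, 'l) mset_map" where
  "join \<Omega>1 \<Omega>2 = (\<Sum>\<mu>1 \<in># \<Omega>1. \<Sum>\<mu>2 \<in># \<Omega>2.
      (if compatible \<mu>1 \<mu>2 then {#\<mu>1 ++ \<mu>2#} else {#}))"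

definition union_m :: "('v, 'i, 'l) mset_map \<Rightarrow> ('v, 'i, 'l) mset_map \<Rightarrow> ('v, 'i, 'l) mset_map" where
  "union_m \<Omega>1 \<Omega>2 = \<Omega>1 + \<Omega>2"

definition diffF :: "('v, 'i, 'l) sformula \<Rightarrow> ('v, 'i, 'l) mset_map \<Rightarrow> ('v, 'i, 'l) mset_map
                     \<Rightarrow> ('v, 'i, 'l) mset_map" where
  "diffF F \<Omega>1 \<Omega>2 = filter_mset (\<lambda>\<mu>1. \<forall>\<mu>2 \<in># \<Omega>2. \<not> compatible \<mu>1 \<mu>2 \<or>
       (compatible \<mu>1 \<mu>2 \<and> feval (\<mu>1 ++ \<mu>2) F = TFalse)) \<Omega>1"

definition leftjoin :: "('v, 'i, 'l) sformula \<Rightarrow> ('v, 'i, 'l) mset_map \<Rightarrow> ('v, 'i, 'l) mset_map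
                        \<Rightarrow> ('v, 'i, 'l) mset_map" where
  "leftjoin F \<Omega>1 \<Omega>2 = union_m (sel F (join \<Omega>1 \<Omega>2)) (diffF F \<Omega>1 \<Omega>2)"

definition sdiff :: "('v, 'i, 'l) mset_map \<Rightarrow> ('v, 'i, 'l) mset_map \<Rightarrow> ('v, 'i, 'l) mset_map" where
  "sdiff \<Omega>1 \<Omega>2 = filter_mset (\<lambda>\<mu>1. \<forall>\<mu>2 \<in># \<Omega>2. \<not> compatible \<mu>1 \<mu>2) \<Omega>1"

datatype ('v, 'i, 'l) core_expr =
    Arg1
  | Arg2
  | Proj "'v set" "('v, 'i, 'l) core_expr"
  | Sel "('v, 'i, 'l) sformula" "('v, 'i, 'l) core_expr"
  | Join "('v, 'i, 'l) core_expr" "('v, 'i, 'l) core_expr"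
  | Union "('v, 'i, 'l) core_expr" "('v, 'i, 'l) core_expr"
  | SDiff "('v, 'i, 'l) core_expr" "('v, 'i, 'l) core_expr"

fun ceval :: "('v, 'i, 'l) core_expr \<Rightarrow> ('v, 'i, 'l) mset_map \<Rightarrow> ('v, 'i, 'l) mset_map
              \<Rightarrow> ('v, 'i, 'l) mset_map" where
  "ceval Arg1 \<Omega>1 \<Omega>2 = \<Omega>1"
| "ceval Arg2 \<Omega>1 \<Omega>2 = \<Omega>2"
| "ceval (Proj W E) \<Omega>1 \<Omega>2 = proj W (ceval E \<Omega>1 \<Omega>2)"
| "ceval (Sel F E) \<Omega>1 \<Omega>2 = sel F (ceval E \<Omega>1 \<Omega>2)"
| "ceval (Join E1 E2) \<Omega>1 \<Omega>2 = join (ceval E1 \<Omega>1 \<Omega>2) (ceval E2 \<Omega>1 \<Omega>2)"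
| "ceval (Union E1 E2) \<Omega>1 \<Omega>2 = union_m (ceval E1 \<Omega>1 \<Omega>2) (ceval E2 \<Omega>1 \<Omega>2)"
| "ceval (SDiff E1 E2) \<Omega>1 \<Omega>2 = sdiff (ceval E1 \<Omega>1 \<Omega>2) (ceval E2 \<Omega>1 \<Omega>2)"

end

theory Submission
  imports Defs
begin

text \<open>Since \<open>\<Omega>1 \<setminus>\<^sub>F \<Omega>2\<close> is a filter of \<open>\<Omega>1\<close>, it suffices to recognise the mappings \<open>\<mu>1\<close> it
  removes: those compatible with some \<open>\<mu>2 \<in> \<Omega>2\<close> such that F is not false on \<open>\<mu>1 \<union> \<mu>2\<close>. The
  natural candidate removes from \<open>\<Omega>1\<close> everything compatible with a mapping of \<open>\<Omega>1 \<Join> \<Omega>2\<close>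
  on which F is not false. This is wrong in general, as \<open>\<mu>1\<close> may be compatible with \<open>\<mu>1' \<union> \<mu>2\<close>
  for an \<open>\<mu>1'\<close> binding more variables of F. It is right as soon as all mappings of \<open>\<Omega>1\<close> bind
  the same variables of F, because then \<open>\<mu>1 \<union> \<mu>2\<close> and \<open>\<mu>1' \<union> \<mu>2\<close> agree on them. So \<open>\<Omega>1\<close>
  is first split into such parts by selections on \<open>bound(?X)\<close> for the finitely many variables
  of F. The construction does not need I, L or V to be infinite.\<close>

fun fvars :: "('v, 'i, 'l) sformula \<Rightarrow> 'v list" where
  "fvars (EqC x c) = [x]"
| "fvars (EqV x y) = [x, y]"
| "fvars (Bound x) = [x]"
| "fvars (FAnd F G) = fvars F @ fvars G"
| "fvars (FOr F G) = fvars F @ fvars G"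
| "fvars (FNot F) = fvars F"

lemma feval_cong: "(\<forall>v \<in> set (fvars F). \<mu> v = \<mu>' v) \<Longrightarrow> feval \<mu> F = feval \<mu>' F"
  by (induction F) (auto simp: domIff)

text \<open>Selection keeps only mappings where the formula is true, so "F is not false" (true or
  error) cannot be written as a negation of F; it needs the two-valued encodings below.\<close>

fun is_true :: "('v, 'i, 'l) sformula \<Rightarrow> ('v, 'i, 'l) sformula"
and is_false :: "('v, 'i, 'l) sformula \<Rightarrow> ('v, 'i, 'l) sformula" where
  "is_true (EqC x c) = FAnd (Bound x) (EqC x c)"
| "is_true (EqV x y) = FAnd (FAnd (Bound x) (Bound y)) (EqV x y)"
| "is_true (Bound x) = Bound x"
| "is_true (FAnd F G) = FAnd (is_true F) (is_true G)"
| "is_true (FOr F G) = FOr (is_true F) (is_true G)"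
| "is_true (FNot F) = is_false F"
| "is_false (EqC x c) = FAnd (Bound x) (FNot (EqC x c))"
| "is_false (EqV x y) = FAnd (FAnd (Bound x) (Bound y)) (FNot (EqV x y))"
| "is_false (Bound x) = FNot (Bound x)"
| "is_false (FAnd F G) = FOr (is_false F) (is_false G)"
| "is_false (FOr F G) = FAnd (is_false F) (is_false G)"
| "is_false (FNot F) = is_true F"

lemma feval_is_true_is_false:
  "feval \<mu> (is_true F) = (if feval \<mu> F = TTrue then TTrue else TFalse) \<and>
   feval \<mu> (is_false F) = (if feval \<mu> F = TFalse then TTrue else TFalse)"
proof (induction F)
  case (FNot F) then show ?case by (cases "feval \<mu> F") auto
next
  case (FAnd F G) then show ?case by (cases "feval \<mu> F"; cases "feval \<mu> G") auto
next
  case (FOr F G) then show ?case by (cases "feval \<mu> F"; cases "feval \<mu> G") auto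
qed (auto split: option.splits)

definition not_false :: "('v, 'i, 'l) sformula \<Rightarrow> ('v, 'i, 'l) sformula" where
  "not_false F = FNot (is_false F)"

lemma feval_not_false_iff: "feval \<mu> (not_false F) = TTrue \<longleftrightarrow> feval \<mu> F \<noteq> TFalse"
  using feval_is_true_is_false[of \<mu> F] by (simp add: not_false_def)

lemma compatibleI:
  assumes "\<And>x a b. \<mu>1 x = Some a \<Longrightarrow> \<mu>2 x = Some b \<Longrightarrow> a = b"
  shows "compatible \<mu>1 \<mu>2"
  unfolding compatible_def
proof
  fix x assume "x \<in> dom \<mu>1 \<inter> dom \<mu>2"
  then obtain a b where "\<mu>1 x = Some a" "\<mu>2 x = Some b" by blast
  with assms show "\<mu>1 x = \<mu>2 x" by simp
qed

lemma compatibleD: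
  assumes "compatible \<mu>1 \<mu>2" and "\<mu>1 x = Some a" and "\<mu>2 x = Some b"
  shows "a = b"
proof -
  have "x \<in> dom \<mu>1 \<inter> dom \<mu>2" using assms(2,3) by blast
  with assms(1) have "\<mu>1 x = \<mu>2 x" unfolding compatible_def by blast
  with assms(2,3) show ?thesis by simp
qed

lemma compatible_map_add_self:
  assumes "compatible \<mu>1 \<mu>2"
  shows "compatible \<mu>1 (\<mu>1 ++ \<mu>2)"
proof (rule compatibleI)
  fix x a b assume a: "\<mu>1 x = Some a" and b: "(\<mu>1 ++ \<mu>2) x = Some b"
  show "a = b"
  proof (cases "\<mu>2 x")
    case (Some c)
    with b have "b = c" by simp
    with compatibleD[OF assms a Some] show ?thesis by simp
  qed (use a b in \<open>simp add: map_add_def\<close>)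
qed

lemma compatible_map_add_right:
  assumes "compatible \<mu> (\<mu>' ++ \<mu>2)"
  shows "compatible \<mu> \<mu>2"
proof (rule compatibleI)
  fix x a b assume "\<mu> x = Some a" and "\<mu>2 x = Some b"
  then show "a = b" using compatibleD[OF assms, of x a b] by simp
qed

lemma map_add_eq_if_compatible_same_dom:
  assumes "compatible \<mu> (\<mu>' ++ \<mu>2)" and "v \<in> dom \<mu> \<longleftrightarrow> v \<in> dom \<mu>'"
  shows "(\<mu> ++ \<mu>2) v = (\<mu>' ++ \<mu>2) v"
proof (cases "\<mu>2 v")
  case None
  show ?thesis
  proof (cases "\<mu> v")
    case (Some a)
    with assms(2) obtain b where b: "\<mu>' v = Some b" by auto
    with None have "(\<mu>' ++ \<mu>2) v = Some b" by (simp add: map_add_def)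
    with compatibleD[OF assms(1) Some] have "a = b" .
    with None Some b show ?thesis by (simp add: map_add_def)
  qed (use None assms(2) in \<open>auto simp: map_add_def\<close>)
qed simp

lemma mem_join_iff:
  "\<nu> \<in># join \<Omega>1 \<Omega>2 \<longleftrightarrow> (\<exists>\<mu>1 \<in># \<Omega>1. \<exists>\<mu>2 \<in># \<Omega>2. compatible \<mu>1 \<mu>2 \<and> \<nu> = \<mu>1 ++ \<mu>2)"
proof (induction \<Omega>1)
  case (add \<mu>1 \<Omega>1)
  have "\<nu> \<in># (\<Sum>\<mu>2 \<in># \<Omega>2. if compatible \<mu>1 \<mu>2 then {#\<mu>1 ++ \<mu>2#} else {#}) \<longleftrightarrow>
        (\<exists>\<mu>2 \<in># \<Omega>2. compatible \<mu>1 \<mu>2 \<and> \<nu> = \<mu>1 ++ \<mu>2)"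
    by (induction \<Omega>2) auto
  with add show ?case by (auto simp: join_def)
qed (simp add: join_def)

definition same_bound_vars :: "'v set \<Rightarrow> ('v, 'i, 'l) mset_map \<Rightarrow> bool" where
  "same_bound_vars X \<Omega> \<longleftrightarrow> (\<forall>\<mu> \<in># \<Omega>. \<forall>\<mu>' \<in># \<Omega>. \<forall>v \<in> X. v \<in> dom \<mu> \<longleftrightarrow> v \<in> dom \<mu>')"

lemma same_bound_varsD:
  "same_bound_vars X \<Omega> \<Longrightarrow> \<mu> \<in># \<Omega> \<Longrightarrow> \<mu>' \<in># \<Omega> \<Longrightarrow> v \<in> X \<Longrightarrow> v \<in> dom \<mu> \<longleftrightarrow> v \<in> dom \<mu>'"
  unfolding same_bound_vars_def by meson

lemma sdiff_sel_join_eq_diffF: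
  assumes "same_bound_vars (set (fvars F)) \<Omega>1"
  shows "sdiff \<Omega>1 (sel (not_false F) (join \<Omega>1 \<Omega>2)) = diffF F \<Omega>1 \<Omega>2"
proof -
  have removed_iff: "(\<exists>\<nu> \<in># sel (not_false F) (join \<Omega>1 \<Omega>2). compatible \<mu> \<nu>) \<longleftrightarrow>
        (\<exists>\<mu>2 \<in># \<Omega>2. compatible \<mu> \<mu>2 \<and> feval (\<mu> ++ \<mu>2) F \<noteq> TFalse)"
    if "\<mu> \<in># \<Omega>1" for \<mu>
  proof
    assume "\<exists>\<nu> \<in># sel (not_false F) (join \<Omega>1 \<Omega>2). compatible \<mu> \<nu>"
    then obtain \<nu> where "\<nu> \<in># join \<Omega>1 \<Omega>2" and "feval \<nu> F \<noteq> TFalse" and "compatible \<mu> \<nu>"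
      by (auto simp: sel_def feval_not_false_iff)
    then obtain \<mu>' \<mu>2 where \<mu>': "\<mu>' \<in># \<Omega>1" and \<mu>2: "\<mu>2 \<in># \<Omega>2"
      and not_false: "feval (\<mu>' ++ \<mu>2) F \<noteq> TFalse" and compat: "compatible \<mu> (\<mu>' ++ \<mu>2)"
      unfolding mem_join_iff by blast
    have "\<forall>v \<in> set (fvars F). v \<in> dom \<mu> \<longleftrightarrow> v \<in> dom \<mu>'"
      using same_bound_varsD[OF assms \<open>\<mu> \<in># \<Omega>1\<close> \<mu>'] by simp
    then have "\<forall>v \<in> set (fvars F). (\<mu> ++ \<mu>2) v = (\<mu>' ++ \<mu>2) v"
      using map_add_eq_if_compatible_same_dom[OF compat] by blast
    then have "feval (\<mu> ++ \<mu>2) F = feval (\<mu>' ++ \<mu>2) F"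
      by (rule feval_cong)
    with \<mu>2 not_false compatible_map_add_right[OF compat]
    show "\<exists>\<mu>2 \<in># \<Omega>2. compatible \<mu> \<mu>2 \<and> feval (\<mu> ++ \<mu>2) F \<noteq> TFalse"
      by auto
  next
    assume "\<exists>\<mu>2 \<in># \<Omega>2. compatible \<mu> \<mu>2 \<and> feval (\<mu> ++ \<mu>2) F \<noteq> TFalse"
    then obtain \<mu>2 where "\<mu>2 \<in># \<Omega>2" "compatible \<mu> \<mu>2" "feval (\<mu> ++ \<mu>2) F \<noteq> TFalse"
      by blast
    moreover from \<open>\<mu> \<in># \<Omega>1\<close> \<open>\<mu>2 \<in># \<Omega>2\<close> \<open>compatible \<mu> \<mu>2\<close>
    have "\<mu> ++ \<mu>2 \<in># join \<Omega>1 \<Omega>2"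
      unfolding mem_join_iff by blast
    ultimately have "\<mu> ++ \<mu>2 \<in># sel (not_false F) (join \<Omega>1 \<Omega>2)"
      by (simp add: sel_def feval_not_false_iff)
    with compatible_map_add_self[OF \<open>compatible \<mu> \<mu>2\<close>]
    show "\<exists>\<nu> \<in># sel (not_false F) (join \<Omega>1 \<Omega>2). compatible \<mu> \<nu>"
      by blast
  qed
  show ?thesis
    unfolding sdiff_def diffF_def
  proof (rule filter_mset_cong[OF refl])
    fix \<mu> assume "\<mu> \<in># \<Omega>1"
    from removed_iff[OF this]
    show "(\<forall>\<nu> \<in># sel (not_false F) (join \<Omega>1 \<Omega>2). \<not> compatible \<mu> \<nu>) \<longleftrightarrow>
          (\<forall>\<mu>2 \<in># \<Omega>2. \<not> compatible \<mu> \<mu>2 \<or> compatible \<mu> \<mu>2 \<and> feval (\<mu> ++ \<mu>2) F = TFalse)"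
      by blast
  qed
qed

lemma sel_Bound_add_sel_not_Bound: "sel (Bound v) \<Omega> + sel (FNot (Bound v)) \<Omega> = \<Omega>"
  by (simp add: sel_def multiset_partition[symmetric])

lemma diffF_add: "diffF F (A + B) \<Omega>2 = diffF F A \<Omega>2 + diffF F B \<Omega>2"
  by (simp add: diffF_def)

lemma same_bound_vars_subset:
  "X \<subseteq> Y \<Longrightarrow> same_bound_vars Y \<Omega> \<Longrightarrow> same_bound_vars X \<Omega>"
  unfolding same_bound_vars_def by (meson subsetD)

lemma same_bound_vars_sel_Bound:
  assumes "same_bound_vars X \<Omega>"
  shows "same_bound_vars (insert v X) (sel (Bound v) \<Omega>)"
  unfolding same_bound_vars_def
proof (intro ballI)
  fix \<mu> \<mu>' w assume "\<mu> \<in># sel (Bound v) \<Omega>" "\<mu>' \<in># sel (Bound v) \<Omega>" "w \<in> insert v X"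
  then have "\<mu> \<in># \<Omega>" "\<mu>' \<in># \<Omega>" "v \<in> dom \<mu>" "v \<in> dom \<mu>'" "w = v \<or> w \<in> X"
    by (simp_all add: sel_def split: if_splits)
  then show "w \<in> dom \<mu> \<longleftrightarrow> w \<in> dom \<mu>'"
    using same_bound_varsD[OF assms] by blast
qed

lemma same_bound_vars_sel_not_Bound:
  assumes "same_bound_vars X \<Omega>"
  shows "same_bound_vars (insert v X) (sel (FNot (Bound v)) \<Omega>)"
  unfolding same_bound_vars_def
proof (intro ballI)
  fix \<mu> \<mu>' w assume "\<mu> \<in># sel (FNot (Bound v)) \<Omega>" "\<mu>' \<in># sel (FNot (Bound v)) \<Omega>"
    "w \<in> insert v X"
  then have "\<mu> \<in># \<Omega>" "\<mu>' \<in># \<Omega>" "v \<notin> dom \<mu>" "v \<notin> dom \<mu>'" "w = v \<or> w \<in> X"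
    by (simp_all add: sel_def split: if_splits)
  then show "w \<in> dom \<mu> \<longleftrightarrow> w \<in> dom \<mu>'"
    using same_bound_varsD[OF assms] by blast
qed

fun diffF_expr ::
  "('v, 'i, 'l) sformula \<Rightarrow> 'v list \<Rightarrow> ('v, 'i, 'l) core_expr \<Rightarrow> ('v, 'i, 'l) core_expr" where
  "diffF_expr F [] E = SDiff E (Sel (not_false F) (Join E Arg2))"
| "diffF_expr F (v # vs) E =
     Union (diffF_expr F vs (Sel (Bound v) E)) (diffF_expr F vs (Sel (FNot (Bound v)) E))"

lemma ceval_diffF_expr:
  assumes "same_bound_vars (set (fvars F) - set vs) (ceval E \<Omega>1 \<Omega>2)"
  shows "ceval (diffF_expr F vs E) \<Omega>1 \<Omega>2 = diffF F (ceval E \<Omega>1 \<Omega>2) \<Omega>2"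
  using assms
proof (induction vs arbitrary: E)
  case Nil
  then show ?case by (simp add: sdiff_sel_join_eq_diffF)
next
  case (Cons v vs)
  let ?\<Omega> = "ceval E \<Omega>1 \<Omega>2"
  have split_vars: "set (fvars F) - set vs \<subseteq> insert v (set (fvars F) - set (v # vs))"
    by auto
  have "same_bound_vars (set (fvars F) - set vs) (ceval (Sel (Bound v) E) \<Omega>1 \<Omega>2)"
       "same_bound_vars (set (fvars F) - set vs) (ceval (Sel (FNot (Bound v)) E) \<Omega>1 \<Omega>2)"
    using same_bound_vars_sel_Bound[OF Cons.prems] same_bound_vars_sel_not_Bound[OF Cons.prems]
    by (simp_all add: same_bound_vars_subset[OF split_vars])
  then have "ceval (diffF_expr F (v # vs) E) \<Omega>1 \<Omega>2 =
             diffF F (sel (Bound v) ?\<Omega>) \<Omega>2 + diffF F (sel (FNot (Bound v)) ?\<Omega>) \<Omega>2"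
    by (simp add: Cons.IH union_m_def)
  also have "\<dots> = diffF F ?\<Omega> \<Omega>2"
    by (simp only: diffF_add[symmetric] sel_Bound_add_sel_not_Bound)
  finally show ?case .
qed

theorem lemma2:
  assumes "infinite (UNIV :: 'i set)" and "infinite (UNIV :: 'l set)"
    and "infinite (UNIV :: 'v set)"
  shows "\<forall>F :: ('v, 'i, 'l) sformula. \<exists>E :: ('v, 'i, 'l) core_expr.
           \<forall>\<Omega>1 \<Omega>2. ceval E \<Omega>1 \<Omega>2 = leftjoin F \<Omega>1 \<Omega>2"
proof
  fix F :: "('v, 'i, 'l) sformula"
  have "ceval (diffF_expr F (fvars F) Arg1) \<Omega>1 \<Omega>2 = diffF F \<Omega>1 \<Omega>2" for \<Omega>1 \<Omega>2
    by (simp add: ceval_diffF_expr same_bound_vars_def)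
  then have "ceval (Union (Sel F (Join Arg1 Arg2)) (diffF_expr F (fvars F) Arg1)) \<Omega>1 \<Omega>2 =
             leftjoin F \<Omega>1 \<Omega>2" for \<Omega>1 \<Omega>2
    by (simp add: leftjoin_def)
  then show "\<exists>E. \<forall>\<Omega>1 \<Omega>2. ceval E \<Omega>1 \<Omega>2 = leftjoin F \<Omega>1 \<Omega>2"
    by blast
qed

end
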